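(* (a) Every Steiner triple system on $9$ points of $3$-rank at most $8$ is resolvable. (b) Let $S$ be a Steiner triple system on $27$ points of $3$-rank at most $25$, with a decomposition into three groups $G_1,G_2,G_3$ of size $9$, three $STS(9)$'s on $G_1,G_2,G_3$, and one transversal design $TD[3;9]$ on $G_1,G_2,G_3$ (as in the context). If the Latin square of order $9$ corresponding to this transversal design has an orthogonal mate, then $S$ is resolvable; its blocks partition into $13$ parallel classes.
   Context: A Steiner triple system $STS(v)$ is a pair $(\mathcal{P},\mathcal{B})$ with $|\mathcal{P}|=v$ and $\mathcal{B}$ a set of $3$-subsets (blocks) such that every $2$-subset lies in exactly one block. Its $3$-rank is the rank over $\mathbb{F}_3$ of its block–point incidence matrix. A parallel class is a set of blocks partitioning the point set; the system is resolvable if its blocks can be partitioned into parallel classes. A transversal design $TD[3;T]$ on disjoint groups $H_1,H_2,H_3$ of size $T$ is a set of $T^2$ triples meeting each group once such that each pair of points from distinct groups lies in exactly one triple; equivalently a Latin square of order $T$ (rows $H_1$, columns $H_2$, symbols $H_3$). Two Latin squares of order $n$ are orthogonal if superimposing them yields every ordered pair of symbols exactly once; an orthogonal mate is a Latin square orthogonal to the given one. By the cited structure theorem (Jungnickel et al.), an $STS(27)$ of $3$-rank at most $25$ has its point set partitioned into three groups of size $9$ such that its blocks split into an $STS(9)$ on each group together with a $TD[3;9]$ on the three groups. *)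

theory Defs
  imports Main "HOL-Library.Disjoint_Sets"
begin

definition sts :: "'a set \<Rightarrow> 'a set set \<Rightarrow> bool" where
  "sts P B \<longleftrightarrow> finite P \<and> (\<forall>b\<in>B. b \<subseteq> P \<and> card b = 3) \<and>
     (\<forall>x\<in>P. \<forall>y\<in>P. x \<noteq> y \<longrightarrow> (\<exists>!b. b \<in> B \<and> {x, y} \<subseteq> b))"

text \<open>Linear independence over GF(3) of the rows (indexed by the blocks in S) of the
  block-point incidence matrix; field elements are represented by integers mod 3.\<close>
definition f3_indep_rows :: "'a set \<Rightarrow> 'a set set \<Rightarrow> bool" where
  "f3_indep_rows P S \<longleftrightarrow>
     (\<forall>c :: 'a set \<Rightarrow> int.
        (\<forall>p\<in>P. (\<Sum>b\<in>S. c b * (if p \<in> b then 1 else 0)) mod 3 = 0)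
          \<longrightarrow> (\<forall>b\<in>S. c b mod 3 = 0))"

text \<open>3-rank: rank over GF(3) of the block-point incidence matrix
  (= maximal number of linearly independent rows).\<close>
definition rank3 :: "'a set \<Rightarrow> 'a set set \<Rightarrow> nat" where
  "rank3 P B = Max {card S | S. S \<subseteq> B \<and> f3_indep_rows P S}"

definition parallel_class :: "'a set \<Rightarrow> 'a set set \<Rightarrow> bool" where
  "parallel_class P C \<longleftrightarrow> partition_on P C"

definition resolution :: "'a set \<Rightarrow> 'a set set \<Rightarrow> 'a set set set \<Rightarrow> bool" where
  "resolution P B R \<longleftrightarrow> partition_on B R \<and> (\<forall>C\<in>R. parallel_class P C)"

definition resolvable :: "'a set \<Rightarrow> 'a set set \<Rightarrow> bool" where
  "resolvable P B \<longleftrightarrow> (\<exists>R. resolution P B R)"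

definition transversal_design :: "'a set \<Rightarrow> 'a set \<Rightarrow> 'a set \<Rightarrow> 'a set set \<Rightarrow> bool" where
  "transversal_design H1 H2 H3 D \<longleftrightarrow>
     (\<forall>t\<in>D. \<exists>x\<in>H1. \<exists>y\<in>H2. \<exists>z\<in>H3. t = {x, y, z}) \<and>
     (\<forall>x y. ((x \<in> H1 \<and> y \<in> H2) \<or> (x \<in> H1 \<and> y \<in> H3) \<or> (x \<in> H2 \<and> y \<in> H3))
        \<longrightarrow> (\<exists>!t. t \<in> D \<and> {x, y} \<subseteq> t))"

text \<open>The Latin square of a TD: rows H1, columns H2, symbols H3.\<close>
definition td_square :: "'a set \<Rightarrow> 'a set set \<Rightarrow> 'a \<Rightarrow> 'a \<Rightarrow> 'a" where
  "td_square H3 D x y = (THE z. z \<in> H3 \<and> {x, y, z} \<in> D)"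

definition latin_square :: "'a set \<Rightarrow> 'a set \<Rightarrow> 's set \<Rightarrow> ('a \<Rightarrow> 'a \<Rightarrow> 's) \<Rightarrow> bool" where
  "latin_square Rw Cl Sy L \<longleftrightarrow> finite Rw \<and> card Rw = card Cl \<and> card Cl = card Sy \<and>
     (\<forall>x\<in>Rw. bij_betw (L x) Cl Sy) \<and> (\<forall>y\<in>Cl. bij_betw (\<lambda>x. L x y) Rw Sy)"

definition orthogonal_squares ::
  "'a set \<Rightarrow> 'a set \<Rightarrow> 's set \<Rightarrow> 't set \<Rightarrow> ('a \<Rightarrow> 'a \<Rightarrow> 's) \<Rightarrow> ('a \<Rightarrow> 'a \<Rightarrow> 't) \<Rightarrow> bool" where
  "orthogonal_squares Rw Cl S1 S2 L M \<longleftrightarrow>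
     bij_betw (\<lambda>(x, y). (L x y, M x y)) (Rw \<times> Cl) (S1 \<times> S2)"

definition has_orthogonal_mate :: "'a set \<Rightarrow> 'a set \<Rightarrow> 's set \<Rightarrow> ('a \<Rightarrow> 'a \<Rightarrow> 's) \<Rightarrow> bool" where
  "has_orthogonal_mate Rw Cl Sy L \<longleftrightarrow>
     (\<exists>M. latin_square Rw Cl Sy M \<and> orthogonal_squares Rw Cl Sy Sy L M)"

end

theory Submission
  imports Defs
begin

text \<open>An STS(9) is the affine plane of order 3: a point off a block lies on 4 blocks, 3 of
  which meet the block, so there is exactly one parallel block through it. Hence parallelism is
  an equivalence relation on blocks whose 4 classes are parallel classes. For the STS(27), the i-th parallel classes of the three STS(9) combine into 4
  parallel classes of the whole point set, and an orthogonal mate M of the Latin square of the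
  transversal design splits its 81 blocks {x, y, L x y} according to the symbol M x y into 9
  further parallel classes.\<close>

section \<open>Steiner triple systems\<close>

lemma sts_block: "sts P B \<Longrightarrow> b \<in> B \<Longrightarrow> b \<subseteq> P \<and> card b = 3"
  unfolding sts_def by simp

lemma sts_ex1_block:
  "sts P B \<Longrightarrow> x \<in> P \<Longrightarrow> y \<in> P \<Longrightarrow> x \<noteq> y \<Longrightarrow> \<exists>!b. b \<in> B \<and> {x, y} \<subseteq> b"
  by (simp add: sts_def)

lemma sts_block_unique:
  assumes "sts P B" "x \<in> P" "y \<in> P" "x \<noteq> y" "b \<in> B" "c \<in> B" "x \<in> b" "y \<in> b" "x \<in> c" "y \<in> c"
  shows "b = c"
  using sts_ex1_block[OF assms(1-4)] assms(5-) by (metis empty_subsetI insert_subset)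

lemma sts_block_exists:
  "sts P B \<Longrightarrow> x \<in> P \<Longrightarrow> y \<in> P \<Longrightarrow> x \<noteq> y \<Longrightarrow> \<exists>b\<in>B. x \<in> b \<and> y \<in> b"
  by (drule (3) sts_ex1_block) auto

lemma sts_finite_blocks:
  assumes "sts P B"
  shows "finite B"
proof (rule finite_subset)
  show "B \<subseteq> Pow P"
    using sts_block[OF assms] by blast
  show "finite (Pow P)"
    using assms by (simp add: sts_def)
qed

lemma sts_replication:
  assumes s: "sts P B" and x: "x \<in> P"
  shows "2 * card {b\<in>B. x \<in> b} = card P - 1"
proof -
  let ?S = "{b\<in>B. x \<in> b}"
  let ?C = "(\<lambda>b. b - {x}) ` ?S"
  have "inj_on (\<lambda>b. b - {x}) ?S"
    by (rule inj_onI) (metis (no_types, lifting) insert_Diff mem_Collect_eq)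
  then have "card ?C = card ?S"
    by (rule card_image)
  moreover have U: "\<Union>?C = P - {x}"
    using sts_block[OF s] sts_block_exists[OF s x] by blast
  moreover have "2 * card ?C = card (\<Union>?C)"
  proof (rule card_partition)
    show "finite ?C"
      using sts_finite_blocks[OF s] by simp
    show "finite (\<Union>?C)"
      using s unfolding U sts_def by simp
    show "card c = 2" if "c \<in> ?C" for c
      using that sts_block[OF s] by auto
    show "c1 \<inter> c2 = {}" if "c1 \<in> ?C" "c2 \<in> ?C" "c1 \<noteq> c2" for c1 c2
      using that sts_block_unique[OF s x] sts_block[OF s] by blast
  qed
  ultimately show ?thesis
    using x s by (simp add: sts_def)
qed

lemma sts_card_blocks_meeting:
  assumes s: "sts P B" and b: "b \<in> B" and x: "x \<in> P" "x \<notin> b"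
  shows "card {c\<in>B. x \<in> c \<and> c \<inter> b \<noteq> {}} = 3"
proof -
  define g where "g y = (THE c. c \<in> B \<and> {x, y} \<subseteq> c)" for y
  have bP: "b \<subseteq> P" "card b = 3"
    using sts_block[OF s b] by auto
  have g: "g y \<in> B \<and> {x, y} \<subseteq> g y" if "y \<in> b" for y
    unfolding g_def using theI'[OF sts_ex1_block[OF s x(1)]] that bP x by blast
  have "{c\<in>B. x \<in> c \<and> c \<inter> b \<noteq> {}} = g ` b"
  proof
    show "g ` b \<subseteq> {c\<in>B. x \<in> c \<and> c \<inter> b \<noteq> {}}"
      using g by blast
    show "{c\<in>B. x \<in> c \<and> c \<inter> b \<noteq> {}} \<subseteq> g ` b"
    proof
      fix c assume c: "c \<in> {c\<in>B. x \<in> c \<and> c \<inter> b \<noteq> {}}"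
      then obtain y where "y \<in> c" "y \<in> b" by blast
      with c g[of y] bP x have "c = g y"
        using sts_block_unique[OF s x(1), of y c "g y"] by blast
      with \<open>y \<in> b\<close> show "c \<in> g ` b" by blast
    qed
  qed
  moreover have "inj_on g b"
  proof (rule inj_onI)
    fix y1 y2 assume y: "y1 \<in> b" "y2 \<in> b" "g y1 = g y2"
    show "y1 = y2"
    proof (rule ccontr)
      assume "y1 \<noteq> y2"
      with y g bP have "g y1 = b"
        using sts_block_unique[OF s, of y1 y2 "g y1" b] b by auto
      with g[OF y(1)] x show False by simp
    qed
  qed
  ultimately show ?thesis
    using card_image bP by metis
qed

text \<open>In an STS(9) every point lies on 4 blocks, 3 of which meet a given block
  not through it.\<close>
lemma sts9_ex1_parallel_block:
  assumes s: "sts P B" and c9: "card P = 9" and b: "b \<in> B" and x: "x \<in> P" "x \<notin> b"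
  shows "\<exists>!c. c \<in> B \<and> x \<in> c \<and> c \<inter> b = {}"
proof -
  let ?A = "{c\<in>B. x \<in> c}" and ?C = "{c\<in>B. x \<in> c \<and> c \<inter> b \<noteq> {}}"
  have "card ?A = 4"
    using sts_replication[OF s x(1)] c9 by simp
  moreover have "card ?C = 3"
    by (rule sts_card_blocks_meeting[OF s b x])
  moreover have "finite ?A"
    using sts_finite_blocks[OF s] by simp
  moreover have "?C \<subseteq> ?A" by blast
  ultimately have "card (?A - ?C) = 1"
    by (simp add: card_Diff_subset finite_subset)
  moreover have "?A - ?C = {c\<in>B. x \<in> c \<and> c \<inter> b = {}}"
    by blast
  ultimately obtain c where c: "{c\<in>B. x \<in> c \<and> c \<inter> b = {}} = {c}"
    by (metis card_1_singletonE)
  show ?thesis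
  proof (rule ex1I)
    show "c \<in> B \<and> x \<in> c \<and> c \<inter> b = {}"
      using c by (metis (mono_tags, lifting) mem_Collect_eq singletonI)
  qed (use c in blast)
qed

definition parallel_rel :: "'a set set \<Rightarrow> ('a set \<times> 'a set) set" where
  "parallel_rel B = {(b, c). b \<in> B \<and> c \<in> B \<and> (b = c \<or> b \<inter> c = {})}"

lemma sts9_equiv_parallel_rel:
  assumes s: "sts P B" and c9: "card P = 9"
  shows "equiv B (parallel_rel B)"
proof (rule equivI)
  show "trans (parallel_rel B)"
  proof (rule transI)
    fix b c d assume bc: "(b, c) \<in> parallel_rel B" and cd: "(c, d) \<in> parallel_rel B"
    show "(b, d) \<in> parallel_rel B"
    proof (cases "b = c \<or> c = d")
      case True
      with bc cd show ?thesis by auto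
    next
      case False
      with bc cd have B: "b \<in> B" "c \<in> B" "d \<in> B" and "b \<inter> c = {}" "c \<inter> d = {}"
        unfolding parallel_rel_def by auto
      have "b = d" if "x \<in> b" "x \<in> d" for x
      proof -
        have "x \<in> P" "x \<notin> c"
          using that B \<open>b \<inter> c = {}\<close> sts_block[OF s] by blast+
        with sts9_ex1_parallel_block[OF s c9 B(2)] show ?thesis
          using that B \<open>b \<inter> c = {}\<close> \<open>c \<inter> d = {}\<close> by (metis Int_commute)
      qed
      with B show ?thesis
        unfolding parallel_rel_def by blast
    qed
  qed
next
  show "parallel_rel B \<subseteq> B \<times> B" "refl_on B (parallel_rel B)" "sym (parallel_rel B)"
    unfolding parallel_rel_def refl_on_def sym_def by blast+
qed

lemma sts9_parallel_class:
  assumes s: "sts P B" and c9: "card P = 9" and C: "C \<in> B // parallel_rel B"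
  shows "parallel_class P C"
proof -
  have eq: "equiv B (parallel_rel B)"
    by (rule sts9_equiv_parallel_rel[OF s c9])
  obtain b where b: "b \<in> B" and Cb: "C = parallel_rel B `` {b}"
    using C by (rule quotientE)
  have "P \<subseteq> \<Union>C"
  proof
    fix x assume x: "x \<in> P"
    show "x \<in> \<Union>C"
    proof (cases "x \<in> b")
      case True
      then show ?thesis
        using equiv_class_self[OF eq b] unfolding Cb by blast
    next
      case False
      then obtain c where "c \<in> B" "x \<in> c" "c \<inter> b = {}"
        using sts9_ex1_parallel_block[OF s c9 b x] by blast
      then show ?thesis
        using b unfolding Cb parallel_rel_def by blast
    qed
  qed
  moreover have "\<Union>C \<subseteq> P" "{} \<notin> C"
    using C Union_quotient[OF eq] sts_block[OF s] by fastforce+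
  moreover have "disjnt c d" if "c \<in> C" "d \<in> C" "c \<noteq> d" for c d
  proof -
    have "(b, c) \<in> parallel_rel B" "(b, d) \<in> parallel_rel B"
      using that unfolding Cb by auto
    then have "(c, d) \<in> parallel_rel B"
      using equiv_class_eq_iff[OF eq] by metis
    then show ?thesis
      using that unfolding parallel_rel_def disjnt_def by blast
  qed
  ultimately show ?thesis
    unfolding parallel_class_def by (intro partition_onI) auto
qed

text \<open>Each parallel class contains exactly one of the 4 blocks through a fixed point.\<close>
lemma sts9_card_parallel_classes:
  assumes s: "sts P B" and c9: "card P = 9"
  shows "card (B // parallel_rel B) = 4"
proof -
  have eq: "equiv B (parallel_rel B)"
    by (rule sts9_equiv_parallel_rel[OF s c9])
  obtain x where x: "x \<in> P"
    using c9 by fastforce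
  let ?A = "{c\<in>B. x \<in> c}" and ?cls = "\<lambda>c. parallel_rel B `` {c}"
  have "inj_on ?cls ?A"
  proof (rule inj_onI)
    fix c c' assume "c \<in> ?A" "c' \<in> ?A" "?cls c = ?cls c'"
    then have "(c, c') \<in> parallel_rel B"
      using eq_equiv_class[OF _ eq] by blast
    with \<open>c \<in> ?A\<close> \<open>c' \<in> ?A\<close> show "c = c'"
      unfolding parallel_rel_def by blast
  qed
  moreover have "?cls ` ?A = B // parallel_rel B"
  proof
    show "?cls ` ?A \<subseteq> B // parallel_rel B"
      by (auto intro: quotientI)
    show "B // parallel_rel B \<subseteq> ?cls ` ?A"
    proof
      fix C assume C: "C \<in> B // parallel_rel B"
      then obtain b where "b \<in> B" and Cb: "C = ?cls b"
        by (rule quotientE)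
      obtain c where "c \<in> C" "x \<in> c"
        using sts9_parallel_class[OF s c9 C] x
        unfolding parallel_class_def partition_on_def by blast
      then have "C = ?cls c" "c \<in> ?A"
        using equiv_class_eq[OF eq] unfolding Cb by (auto simp: parallel_rel_def)
      then show "C \<in> ?cls ` ?A"
        by blast
    qed
  qed
  ultimately show ?thesis
    using card_image sts_replication[OF s x] c9 by fastforce
qed

lemma sts9_resolution:
  assumes s: "sts P B" and c9: "card P = 9"
  shows "resolution P B (B // parallel_rel B)"
  unfolding resolution_def
  using partition_on_quotient[OF sts9_equiv_parallel_rel[OF s c9]] sts9_parallel_class[OF s c9]
  by blast

section \<open>Combining resolutions\<close>

lemma partition_on_Un:
  assumes "partition_on A X" "partition_on A' Y" "A \<inter> A' = {}"
  shows "partition_on (A \<union> A') (X \<union> Y)"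
  using assms disjoint_union[of X Y] unfolding partition_on_def by auto

lemma resolution_class_subset: "resolution P B R \<Longrightarrow> C \<in> R \<Longrightarrow> C \<subseteq> B"
  unfolding resolution_def partition_on_def by blast

lemma resolution_block_nonempty: "resolution P B R \<Longrightarrow> C \<in> R \<Longrightarrow> b \<in> C \<Longrightarrow> b \<noteq> {}"
  unfolding resolution_def parallel_class_def partition_on_def by blast

lemma resolution_block_subset: "resolution P B R \<Longrightarrow> C \<in> R \<Longrightarrow> b \<in> C \<Longrightarrow> b \<subseteq> P"
  unfolding resolution_def parallel_class_def partition_on_def by blast

lemma resolution_classes_disjoint:
  "resolution P B R \<Longrightarrow> C \<in> R \<Longrightarrow> C' \<in> R \<Longrightarrow> C \<noteq> C' \<Longrightarrow> C \<inter> C' = {}"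
  unfolding resolution_def by (meson disjointD partition_onD2)

lemma resolution_classes_disjoint_points:
  assumes "resolution P B R" "resolution P' B' R'" "P \<inter> P' = {}" "C \<in> R" "C' \<in> R'"
  shows "C \<inter> C' = {}"
proof (rule equals0I)
  fix b assume "b \<in> C \<inter> C'"
  then have "b \<subseteq> P" "b \<subseteq> P'" "b \<noteq> {}"
    using resolution_block_subset[OF assms(1,4)] resolution_block_subset[OF assms(2,5)]
      resolution_block_nonempty[OF assms(1,4)] by auto
  with \<open>P \<inter> P' = {}\<close> show False
    by blast
qed

lemma resolution_Un_blocks:
  assumes R: "resolution P A R" and R': "resolution P A' R'" and AA': "A \<inter> A' = {}"
  shows "resolution P (A \<union> A') (R \<union> R')" "R \<inter> R' = {}"
proof -
  have "partition_on A R" "partition_on A' R'"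
    using R R' unfolding resolution_def by simp_all
  then have "partition_on (A \<union> A') (R \<union> R')"
    using AA' by (rule partition_on_Un)
  with R R' show "resolution P (A \<union> A') (R \<union> R')"
    unfolding resolution_def by blast
  show "R \<inter> R' = {}"
  proof (rule equals0I)
    fix C assume "C \<in> R \<inter> R'"
    then have "C \<subseteq> A" "C \<subseteq> A'" "C \<noteq> {}"
      using resolution_class_subset[OF R] resolution_class_subset[OF R']
        \<open>partition_on A R\<close> partition_onD3 by blast+
    with AA' show False
      by blast
  qed
qed

lemma resolution_Un_points:
  assumes R1: "resolution P1 B1 R1" and R2: "resolution P2 B2 R2" and P12: "P1 \<inter> P2 = {}"
    and h: "bij_betw h R1 R2"
  shows "resolution (P1 \<union> P2) (B1 \<union> B2) ((\<lambda>C. C \<union> h C) ` R1)"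
    and "card ((\<lambda>C. C \<union> h C) ` R1) = card R1"
proof -
  let ?R = "(\<lambda>C. C \<union> h C) ` R1"
  have hC: "h C \<in> R2" if "C \<in> R1" for C
    using h that unfolding bij_betw_def by blast
  have disj: "(C \<union> h C) \<inter> (C' \<union> h C') = {}" if C: "C \<in> R1" "C' \<in> R1" "C \<noteq> C'" for C C'
  proof -
    have "h C \<noteq> h C'"
      using C h unfolding bij_betw_def inj_on_def by blast
    then have "C \<inter> C' = {}" "h C \<inter> h C' = {}" "C \<inter> h C' = {}" "h C \<inter> C' = {}"
      using C hC resolution_classes_disjoint[OF R1] resolution_classes_disjoint[OF R2]
        resolution_classes_disjoint_points[OF R1 R2 P12]
        resolution_classes_disjoint_points[OF R1 R2 P12, of C' "h C"]
      by (auto simp: Int_commute)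
    then show ?thesis
      by blast
  qed
  have ne: "C \<union> h C \<noteq> {}" if "C \<in> R1" for C
    using R1 that unfolding resolution_def partition_on_def by blast
  have "partition_on (B1 \<union> B2) ?R"
  proof (rule partition_onI)
    have "\<Union>R1 = B1" "\<Union>R2 = B2" "h ` R1 = R2"
      using R1 R2 h unfolding resolution_def partition_on_def bij_betw_def by auto
    then show "\<Union>?R = B1 \<union> B2"
      by blast
    show "disjnt p q" if "p \<in> ?R" "q \<in> ?R" "p \<noteq> q" for p q
    proof -
      obtain C C' where "C \<in> R1" "C' \<in> R1" "p = C \<union> h C" "q = C' \<union> h C'"
        using \<open>p \<in> ?R\<close> \<open>q \<in> ?R\<close> by blast
      with \<open>p \<noteq> q\<close> disj show ?thesis
        unfolding disjnt_def by blast
    qed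
    show "{} \<notin> ?R"
      using ne by blast
  qed
  moreover have "parallel_class (P1 \<union> P2) (C \<union> h C)" if "C \<in> R1" for C
    using that hC R1 R2 partition_on_Un[OF _ _ P12] unfolding resolution_def parallel_class_def
    by blast
  ultimately show "resolution (P1 \<union> P2) (B1 \<union> B2) ?R"
    unfolding resolution_def by blast
  have "inj_on (\<lambda>C. C \<union> h C) R1"
  proof (rule inj_onI)
    fix C C' assume "C \<in> R1" "C' \<in> R1" "C \<union> h C = C' \<union> h C'"
    then show "C = C'"
      using disj ne by (metis Int_absorb)
  qed
  then show "card ?R = card R1"
    by (rule card_image)
qed

lemma resolution_Un_points_card:
  assumes "resolution P1 B1 R1" "resolution P2 B2 R2" "P1 \<inter> P2 = {}"
    and "finite R1" "finite R2" "card R1 = card R2"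
  obtains R where "resolution (P1 \<union> P2) (B1 \<union> B2) R" "card R = card R1"
  using finite_same_card_bij[OF assms(4-6)] resolution_Un_points[OF assms(1-3)] by metis

section \<open>Transversal designs with an orthogonal mate\<close>

locale tdesign =
  fixes G1 G2 G3 :: "'a set" and D :: "'a set set"
  assumes td: "transversal_design G1 G2 G3 D"
    and disjoint_groups: "G1 \<inter> G2 = {}" "G1 \<inter> G3 = {}" "G2 \<inter> G3 = {}"
begin

lemma ex1_block:
  assumes "x \<in> G1" "y \<in> G2"
  shows "\<exists>!t. t \<in> D \<and> {x, y} \<subseteq> t"
proof -
  have "\<forall>x y. ((x \<in> G1 \<and> y \<in> G2) \<or> (x \<in> G1 \<and> y \<in> G3) \<or> (x \<in> G2 \<and> y \<in> G3))
      \<longrightarrow> (\<exists>!t. t \<in> D \<and> {x, y} \<subseteq> t)"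
    using td unfolding transversal_design_def by (elim conjE)
  with assms show ?thesis
    by simp
qed

lemma block_unique:
  assumes "x \<in> G1" "y \<in> G2" "t \<in> D" "{x, y} \<subseteq> t" "t' \<in> D" "{x, y} \<subseteq> t'"
  shows "t = t'"
  by (rule ex1E[OF ex1_block[OF assms(1,2)]]) (use assms(3-) in blast)

lemma block_form:
  assumes "t \<in> D"
  obtains x y z where "x \<in> G1" "y \<in> G2" "z \<in> G3" "t = {x, y, z}"
proof -
  have "\<forall>t\<in>D. \<exists>x\<in>G1. \<exists>y\<in>G2. \<exists>z\<in>G3. t = {x, y, z}"
    using td unfolding transversal_design_def by (elim conjE)
  with assms have "\<exists>x\<in>G1. \<exists>y\<in>G2. \<exists>z\<in>G3. t = {x, y, z}"
    by (rule bspec[rotated])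
  then show ?thesis
    by (elim bexE) (rule that; assumption)
qed

lemma block_meets_groups:
  assumes "t \<in> D"
  shows "t \<inter> G1 \<noteq> {}" "t \<inter> G2 \<noteq> {}" "t \<inter> G3 \<noteq> {}"
proof -
  obtain x y z where "x \<in> G1" "y \<in> G2" "z \<in> G3" "t = {x, y, z}"
    using assms by (rule block_form)
  then show "t \<inter> G1 \<noteq> {}" "t \<inter> G2 \<noteq> {}" "t \<inter> G3 \<noteq> {}"
    by blast+
qed

lemma transversal_triple_eq:
  assumes "x \<in> G1" "x' \<in> G1" "y \<in> G2" "y' \<in> G2" "z \<in> G3" "z' \<in> G3"
    and "{x, y, z} = {x', y', z'}"
  shows "x = x' \<and> y = y' \<and> z = z'"
proof -
  have "x \<in> {x', y', z'}" "y \<in> {x', y', z'}" "z \<in> {x', y', z'}"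
    using assms(7) by auto
  with assms(1-6) disjoint_groups show ?thesis
    by blast
qed

lemma ex1_third_point:
  assumes x: "x \<in> G1" and y: "y \<in> G2"
  shows "\<exists>!z. z \<in> G3 \<and> {x, y, z} \<in> D"
proof -
  obtain t where t: "t \<in> D" "{x, y} \<subseteq> t"
    using ex1_implies_ex[OF ex1_block[OF x y]] by blast
  obtain a b c where abc: "a \<in> G1" "b \<in> G2" "c \<in> G3" "t = {a, b, c}"
    using t(1) by (rule block_form)
  with t x y disjoint_groups have "a = x" "b = y"
    by blast+
  with abc t have c: "c \<in> G3 \<and> {x, y, c} \<in> D"
    by simp
  have "z = c" if z: "z \<in> G3 \<and> {x, y, z} \<in> D" for z
  proof -
    have "{x, y, z} = {x, y, c}"
      using block_unique[OF x y] z c by blast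
    then show ?thesis
      using transversal_triple_eq[OF x x y y] z c by blast
  qed
  with c show ?thesis
    by blast
qed

lemma td_square_mem:
  assumes "x \<in> G1" "y \<in> G2"
  shows "td_square G3 D x y \<in> G3" "{x, y, td_square G3 D x y} \<in> D"
  using theI'[OF ex1_third_point[OF assms]] unfolding td_square_def by simp_all

lemma td_square_eqI:
  assumes "x \<in> G1" "y \<in> G2" "z \<in> G3" "{x, y, z} \<in> D"
  shows "td_square G3 D x y = z"
  unfolding td_square_def using the1_equality[OF ex1_third_point] assms by blast

lemma block_td_square:
  assumes "t \<in> D"
  obtains x y where "x \<in> G1" "y \<in> G2" "t = {x, y, td_square G3 D x y}"
proof -
  obtain x y z where "x \<in> G1" "y \<in> G2" "z \<in> G3" "t = {x, y, z}"
    using assms by (rule block_form)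
  with assms td_square_eqI that show ?thesis
    by blast
qed

end

locale tdesign_mate = tdesign +
  fixes M :: "'a \<Rightarrow> 'a \<Rightarrow> 'a"
  assumes latin_mate: "latin_square G1 G2 G3 M"
    and orthogonal_mate: "orthogonal_squares G1 G2 G3 G3 (td_square G3 D) M"
begin

definition mate_class :: "'a \<Rightarrow> 'a set set" where
  "mate_class s = {{x, y, td_square G3 D x y} | x y. x \<in> G1 \<and> y \<in> G2 \<and> M x y = s}"

lemma mate_row: "x \<in> G1 \<Longrightarrow> bij_betw (M x) G2 G3"
  using latin_mate unfolding latin_square_def by blast

lemma mate_column: "y \<in> G2 \<Longrightarrow> bij_betw (\<lambda>x. M x y) G1 G3"
  using latin_mate unfolding latin_square_def by blast

lemma cells_bij: "bij_betw (\<lambda>(x, y). (td_square G3 D x y, M x y)) (G1 \<times> G2) (G3 \<times> G3)"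
  using orthogonal_mate unfolding orthogonal_squares_def .

lemma mate_class_subset: "mate_class s \<subseteq> D"
  unfolding mate_class_def using td_square_mem by blast

lemma mate_class_nonempty:
  assumes "s \<in> G3"
  shows "mate_class s \<noteq> {}"
proof -
  obtain x y where "x \<in> G1" "y \<in> G2" "M x y = s"
    using cells_bij assms unfolding bij_betw_def by (force simp: image_iff)
  then show ?thesis
    unfolding mate_class_def by blast
qed

lemma mate_class_unique:
  assumes "t \<in> mate_class s" "t \<in> mate_class s'"
  shows "s = s'"
proof -
  obtain x y where xy: "x \<in> G1" "y \<in> G2" "M x y = s" "t = {x, y, td_square G3 D x y}"
    using assms(1) unfolding mate_class_def by blast
  obtain x' y' where xy': "x' \<in> G1" "y' \<in> G2" "M x' y' = s'" "t = {x', y', td_square G3 D x' y'}"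
    using assms(2) unfolding mate_class_def by blast
  have "x = x' \<and> y = y'"
    using transversal_triple_eq[OF xy(1) xy'(1) xy(2) xy'(2) td_square_mem(1)[OF xy(1,2)]
        td_square_mem(1)[OF xy'(1,2)]] xy(4) xy'(4) by simp
  with xy xy' show ?thesis
    by simp
qed

lemma mate_class_covers:
  assumes s: "s \<in> G3" and p: "p \<in> G1 \<union> G2 \<union> G3"
  shows "p \<in> \<Union>(mate_class s)"
proof -
  have "\<exists>x\<in>G1. \<exists>y\<in>G2. M x y = s \<and> p \<in> {x, y, td_square G3 D x y}"
  proof -
    consider "p \<in> G1" | "p \<in> G2" | "p \<in> G3"
      using p by blast
    then show ?thesis
    proof cases
      case 1
      with mate_row s show ?thesis
        unfolding bij_betw_def by (metis imageE insertI1)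
    next
      case 2
      with mate_column s show ?thesis
        unfolding bij_betw_def by (metis imageE insertI1 insert_commute)
    next
      case 3
      with s cells_bij obtain x y where "x \<in> G1" "y \<in> G2" "td_square G3 D x y = p" "M x y = s"
        unfolding bij_betw_def by (force simp: image_iff)
      then show ?thesis
        by blast
    qed
  qed
  then show ?thesis
    unfolding mate_class_def by blast
qed

lemma mate_class_disjoint:
  assumes t: "t \<in> mate_class s" and t': "t' \<in> mate_class s" and "t \<noteq> t'"
  shows "t \<inter> t' = {}"
proof (rule ccontr)
  obtain x y where xy: "x \<in> G1" "y \<in> G2" "M x y = s" "t = {x, y, td_square G3 D x y}"
    using t unfolding mate_class_def by blast
  obtain x' y' where xy': "x' \<in> G1" "y' \<in> G2" "M x' y' = s" "t' = {x', y', td_square G3 D x' y'}"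
    using t' unfolding mate_class_def by blast
  assume "t \<inter> t' \<noteq> {}"
  then have "x = x' \<or> y = y' \<or> td_square G3 D x y = td_square G3 D x' y'"
    using xy xy' td_square_mem disjoint_groups by blast
  moreover have "y = y'" if "x = x'"
    using that mate_row[OF xy(1)] xy xy' unfolding bij_betw_def inj_on_def by metis
  moreover have "x = x'" if "y = y'"
    using that mate_column[OF xy(2)] xy xy' unfolding bij_betw_def inj_on_def by metis
  moreover have "x = x' \<and> y = y'" if "td_square G3 D x y = td_square G3 D x' y'"
    using that cells_bij xy xy' unfolding bij_betw_def inj_on_def by fastforce
  ultimately have "t = t'"
    using xy xy' by blast
  with \<open>t \<noteq> t'\<close> show False ..
qed

lemma mate_class_parallel:
  assumes "s \<in> G3"
  shows "parallel_class (G1 \<union> G2 \<union> G3) (mate_class s)"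
  unfolding parallel_class_def
proof (rule partition_onI)
  show "\<Union>(mate_class s) = G1 \<union> G2 \<union> G3"
    using mate_class_covers[OF assms] mate_class_subset
    by (auto elim!: block_form)
  show "disjnt t t'" if "t \<in> mate_class s" "t' \<in> mate_class s" "t \<noteq> t'" for t t'
    using mate_class_disjoint[OF that] unfolding disjnt_def .
  show "{} \<notin> mate_class s"
    unfolding mate_class_def by blast
qed

theorem resolution_mate_classes:
  "resolution (G1 \<union> G2 \<union> G3) D (mate_class ` G3)"
  "card (mate_class ` G3) = card G3"
proof -
  have "D \<subseteq> \<Union>(mate_class ` G3)"
  proof
    fix t assume "t \<in> D"
    then obtain x y where xy: "x \<in> G1" "y \<in> G2" "t = {x, y, td_square G3 D x y}"
      by (rule block_td_square)
    with mate_row[OF xy(1)] have "M x y \<in> G3" "t \<in> mate_class (M x y)"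
      unfolding mate_class_def bij_betw_def by blast+
    then show "t \<in> \<Union>(mate_class ` G3)"
      by blast
  qed
  moreover have "disjnt p q" if "p \<in> mate_class ` G3" "q \<in> mate_class ` G3" "p \<noteq> q" for p q
    using that mate_class_unique unfolding disjnt_def by blast
  ultimately have "partition_on D (mate_class ` G3)"
    using mate_class_subset mate_class_nonempty by (intro partition_onI) (blast, assumption, force)
  then show "resolution (G1 \<union> G2 \<union> G3) D (mate_class ` G3)"
    unfolding resolution_def using mate_class_parallel by blast
  have "inj_on mate_class G3"
    using mate_class_nonempty mate_class_unique by (intro inj_onI) blast
  then show "card (mate_class ` G3) = card G3"
    by (rule card_image)
qed

end

lemma transversal_design_resolution:
  assumes "transversal_design G1 G2 G3 D" "G1 \<inter> G2 = {}" "G1 \<inter> G3 = {}" "G2 \<inter> G3 = {}"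
    and "has_orthogonal_mate G1 G2 G3 (td_square G3 D)"
  obtains R where "resolution (G1 \<union> G2 \<union> G3) D R" "card R = card G3"
proof -
  obtain M where "latin_square G1 G2 G3 M" "orthogonal_squares G1 G2 G3 G3 (td_square G3 D) M"
    using assms(5) unfolding has_orthogonal_mate_def by blast
  with assms(1-4) interpret tdesign_mate G1 G2 G3 D M
    by unfold_locales
  from resolution_mate_classes that show ?thesis
    by blast
qed

section \<open>Steiner triple systems from three STS(9) and a transversal design\<close>

lemma resolution_from_groups_and_mate:
  assumes P: "P = G1 \<union> G2 \<union> G3"
    and disj: "G1 \<inter> G2 = {}" "G1 \<inter> G3 = {}" "G2 \<inter> G3 = {}"
    and card: "card G1 = 9" "card G2 = 9" "card G3 = 9"
    and sts: "sts G1 B1" "sts G2 B2" "sts G3 B3"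
    and td: "transversal_design G1 G2 G3 D"
    and B: "B = B1 \<union> B2 \<union> B3 \<union> D"
    and mate: "has_orthogonal_mate G1 G2 G3 (td_square G3 D)"
  obtains R where "resolution P B R" "card R = 13"
proof -
  interpret tdesign G1 G2 G3 D
    using td disj by unfold_locales
  let ?R1 = "B1 // parallel_rel B1" and ?R2 = "B2 // parallel_rel B2"
    and ?R3 = "B3 // parallel_rel B3"
  have R: "resolution G1 B1 ?R1" "resolution G2 B2 ?R2" "resolution G3 B3 ?R3"
    using sts card by (simp_all add: sts9_resolution)
  have cR: "card ?R1 = 4" "card ?R2 = 4" "card ?R3 = 4"
    using sts card by (simp_all add: sts9_card_parallel_classes)
  have fin: "finite ?R1" "finite ?R2" "finite ?R3"
    using cR by (simp_all add: card_ge_0_finite)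
  obtain R12 where R12: "resolution (G1 \<union> G2) (B1 \<union> B2) R12" "card R12 = 4"
    using resolution_Un_points_card[OF R(1,2) disj(1) fin(1,2)] cR by auto
  moreover have "(G1 \<union> G2) \<inter> G3 = {}" "finite R12"
    using disj R12(2) by (auto simp: card_ge_0_finite)
  ultimately obtain R123 where R123: "resolution P (B1 \<union> B2 \<union> B3) R123" "card R123 = 4"
    using resolution_Un_points_card[OF R12(1) R(3)] fin(3) cR P by auto
  obtain RD where RD: "resolution P D RD" "card RD = 9"
    by (rule transversal_design_resolution[OF td disj mate]) (simp_all add: P card)
  have "(B1 \<union> B2 \<union> B3) \<inter> D = {}"
  proof (rule equals0I)
    fix t assume t: "t \<in> (B1 \<union> B2 \<union> B3) \<inter> D"
    then have "t \<subseteq> G1 \<or> t \<subseteq> G2 \<or> t \<subseteq> G3"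
      using sts_block[OF sts(1)] sts_block[OF sts(2)] sts_block[OF sts(3)] by blast
    moreover have "t \<inter> G1 \<noteq> {}" "t \<inter> G2 \<noteq> {}"
      using t block_meets_groups by blast+
    ultimately show False
      using disj by blast
  qed
  then have "resolution P B (R123 \<union> RD)" "R123 \<inter> RD = {}"
    using resolution_Un_blocks[OF R123(1) RD(1)] B by simp_all
  moreover have "card (R123 \<union> RD) = 13"
    using card_Un_disjoint[of R123 RD] R123(2) RD(2) \<open>R123 \<inter> RD = {}\<close>
    by (simp add: card_ge_0_finite)
  ultimately show ?thesis
    using that by blast
qed

theorem proposition3p6:
  shows "(\<forall>(P :: 'a set) B. sts P B \<and> card P = 9 \<and> rank3 P B \<le> 8 \<longrightarrow> resolvable P B)
    \<and> (\<forall>(P :: 'a set) B G1 G2 G3 B1 B2 B3 D.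
         sts P B \<and> card P = 27 \<and> rank3 P B \<le> 25 \<and>
         P = G1 \<union> G2 \<union> G3 \<and> G1 \<inter> G2 = {} \<and> G1 \<inter> G3 = {} \<and> G2 \<inter> G3 = {} \<and>
         card G1 = 9 \<and> card G2 = 9 \<and> card G3 = 9 \<and>
         sts G1 B1 \<and> sts G2 B2 \<and> sts G3 B3 \<and> transversal_design G1 G2 G3 D \<and>
         B = B1 \<union> B2 \<union> B3 \<union> D \<and>
         has_orthogonal_mate G1 G2 G3 (td_square G3 D)
       \<longrightarrow> resolvable P B \<and> (\<exists>R. resolution P B R \<and> card R = 13))"
proof (intro conjI allI impI)
  fix P :: "'a set" and B
  assume "sts P B \<and> card P = 9 \<and> rank3 P B \<le> 8"
  then show "resolvable P B"
    unfolding resolvable_def using sts9_resolution by blast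
next
  fix P :: "'a set" and B G1 G2 G3 B1 B2 B3 D
  assume "sts P B \<and> card P = 27 \<and> rank3 P B \<le> 25 \<and>
         P = G1 \<union> G2 \<union> G3 \<and> G1 \<inter> G2 = {} \<and> G1 \<inter> G3 = {} \<and> G2 \<inter> G3 = {} \<and>
         card G1 = 9 \<and> card G2 = 9 \<and> card G3 = 9 \<and>
         sts G1 B1 \<and> sts G2 B2 \<and> sts G3 B3 \<and> transversal_design G1 G2 G3 D \<and>
         B = B1 \<union> B2 \<union> B3 \<union> D \<and>
         has_orthogonal_mate G1 G2 G3 (td_square G3 D)"
  then obtain R where "resolution P B R" "card R = 13"
    using resolution_from_groups_and_mate[of P G1 G2 G3 B1 B2 B3 D B] by blast
  then show "resolvable P B" "\<exists>R. resolution P B R \<and> card R = 13"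
    unfolding resolvable_def by blast+
qed

end
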